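(* There is a function $q(k)\in\Theta(k^2)$ such that the following holds. Let $G$ be a graph, let $k$ be the number of robots of a CSMP instance on $G$, and let $G'$ be an $(r,q(k))$-meta-haven of $G$ with $r\le 2k$. Let $S\subseteq\mathcal R$ be a set of robots located on vertices of $G'$ in configuration $\iota$, and assume no robot outside $S$ is located on a vertex of $G'$. Then for every configuration $\iota'$ of $S$ with respect to $G'$, there is a sequence of $O(k^7)$ sliding moves, each along a path of $G'$, that transforms $\iota$ into $\iota'$.
   Context: Robots and sliding moves: robots occupy pairwise distinct vertices of $G$; a sliding move moves one robot along a simple path of $G$ from its current vertex to another vertex such that no other robot is located on any vertex of that path, all other robots staying put. For a set $S$ of robots and a subgraph $H$ of $G$, a configuration of $S$ with respect to $H$ is an injection $\iota:S\to V(H)$. The length of a path is its number of edges; for a path $P$ and vertices $u,v$ on it, the $P$-distance between $u$ and $v$ is the length of the subpath of $P$ between $u$ and $v$. Havens: for $q\in\mathbb N$, a vertex $w$ of degree at least three in $G$ lying on a path $P$ of length $q$ is a $q$-anchor, and $P$ is a $q$-haven anchored at $w$. $P$ is a $q$-haven for a vertex $v$ (anchored at $w$) if $v$ lies on $P$ and has $P$-distance at least $\lceil q/3\rceil$ and at most $\lfloor 2q/3\rfloor$ from $w$. $P$ is a strong $q$-haven anchored at $w$ if it is a $q$-haven anchored at $w$ for both endpoints of $P$. For a strong $q$-haven $H_w$ anchored at $w$, $\hat H_w$ is the union of $H_w$ and an arbitrarily chosen set of three edges of $G$ incident to $w$. A connected subgraph $G'$ of $G$ is an $(r,q)$-meta-haven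 if it is the union of the edge sets of graphs $\hat H_{w_1},\dots,\hat H_{w_r}$, where each $H_{w_i}$ is a strong $q$-haven anchored at $w_i$. *)

theory Defs
  imports Main "HOL-Library.Landau_Symbols"
begin

definition graph :: "'a set \<Rightarrow> 'a set set \<Rightarrow> bool" where
  "graph V E \<longleftrightarrow> finite V \<and> (\<forall>e\<in>E. \<exists>u v. u \<noteq> v \<and> u \<in> V \<and> v \<in> V \<and> e = {u, v})"

definition degree :: "'a set set \<Rightarrow> 'a \<Rightarrow> nat" where
  "degree E w = card {e\<in>E. w \<in> e}"

text \<open>A simple path, as the (nonempty, duplicate-free) list of its vertices;
its length is the number of edges, i.e. length p - 1.\<close>
definition is_path :: "'a set set \<Rightarrow> 'a list \<Rightarrow> bool" where
  "is_path E p \<longleftrightarrow> p \<noteq> [] \<and> distinct p \<and> (\<forall>i. Suc i < length p \<longrightarrow> {p ! i, p ! Suc i} \<in> E)"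

definition path_edges :: "'a list \<Rightarrow> 'a set set" where
  "path_edges p = {{p ! i, p ! Suc i} | i. Suc i < length p}"

definition connected_graph :: "'a set \<Rightarrow> 'a set set \<Rightarrow> bool" where
  "connected_graph V E \<longleftrightarrow> (\<forall>u\<in>V. \<forall>v\<in>V. \<exists>p. is_path E p \<and> set p \<subseteq> V \<and> hd p = u \<and> last p = v)"

definition path_dist :: "'a list \<Rightarrow> 'a \<Rightarrow> 'a \<Rightarrow> nat \<Rightarrow> bool" where
  "path_dist P u v d \<longleftrightarrow> (\<exists>i j. i < length P \<and> j < length P \<and> P ! i = u \<and> P ! j = v \<and>
      d = (if i \<le> j then j - i else i - j))"

definition haven :: "'a set set \<Rightarrow> nat \<Rightarrow> 'a \<Rightarrow> 'a list \<Rightarrow> bool" where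
  "haven E q w P \<longleftrightarrow> is_path E P \<and> length P = q + 1 \<and> w \<in> set P \<and> degree E w \<ge> 3"

text \<open>P is a q-haven for v anchored at w; note ceil(q/3) = (q+2) div 3 and
floor(2q/3) = (2q) div 3.\<close>
definition haven_for :: "'a set set \<Rightarrow> nat \<Rightarrow> 'a \<Rightarrow> 'a list \<Rightarrow> 'a \<Rightarrow> bool" where
  "haven_for E q w P v \<longleftrightarrow> haven E q w P \<and> v \<in> set P \<and>
     (\<exists>d. path_dist P v w d \<and> (q + 2) div 3 \<le> d \<and> d \<le> (2 * q) div 3)"

definition strong_haven :: "'a set set \<Rightarrow> nat \<Rightarrow> 'a \<Rightarrow> 'a list \<Rightarrow> bool" where
  "strong_haven E q w P \<longleftrightarrow> haven_for E q w P (hd P) \<and> haven_for E q w P (last P)"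

definition hat_haven_edges :: "'a set set \<Rightarrow> nat \<Rightarrow> 'a \<Rightarrow> 'a list \<Rightarrow> 'a set set \<Rightarrow> 'a set set \<Rightarrow> bool" where
  "hat_haven_edges E q w P T F \<longleftrightarrow> strong_haven E q w P \<and> T \<subseteq> E \<and> card T = 3 \<and>
     (\<forall>e\<in>T. w \<in> e) \<and> F = path_edges P \<union> T"

definition meta_haven :: "'a set \<Rightarrow> 'a set set \<Rightarrow> nat \<Rightarrow> nat \<Rightarrow> 'a set \<Rightarrow> 'a set set \<Rightarrow> bool" where
  "meta_haven V E r q V' E' \<longleftrightarrow>
     (\<exists>hs :: ('a \<times> 'a list \<times> 'a set set) list. length hs = r \<and>
        (\<forall>(w, P, T) \<in> set hs. hat_haven_edges E q w P T (path_edges P \<union> T)) \<and>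
        E' = (\<Union>(w, P, T) \<in> set hs. path_edges P \<union> T)) \<and>
     V' = \<Union>E' \<and> connected_graph V' E'"

definition sliding_move :: "'a set set \<Rightarrow> 'r set \<Rightarrow> ('r \<Rightarrow> 'a) \<Rightarrow> ('r \<Rightarrow> 'a) \<Rightarrow> bool" where
  "sliding_move E R c c' \<longleftrightarrow>
     (\<exists>x\<in>R. \<exists>p. is_path E p \<and> length p \<ge> 2 \<and> hd p = c x \<and> last p = c' x \<and>
        (\<forall>y\<in>R. y \<noteq> x \<longrightarrow> c y \<notin> set p \<and> c' y = c y))"

definition move_sequence :: "'a set set \<Rightarrow> 'r set \<Rightarrow> ('r \<Rightarrow> 'a) list \<Rightarrow> bool" where
  "move_sequence E R cs \<longleftrightarrow> cs \<noteq> [] \<and> (\<forall>i. Suc i < length cs \<longrightarrow> sliding_move E R (cs ! i) (cs ! Suc i))"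

end

theory Submission
  imports Defs "HOL-Real_Asymp.Real_Asymp"
begin

text \<open>The anchor w of a strong haven has a third neighbour besides its two neighbours on the haven,
  and both arms of the haven at w have length at least q/3. Shortcutting the haven if that
  neighbour lies on it, one obtains a T-junction: a path with a pendant vertex b at a branch vertex,
  both arms of which have room for all k robots. The robots of S are first gathered, by cascades of
  slides along paths of the meta-haven, on the k vertices of the left arm next to the branch vertex.
  There two robots are exchanged in O(k) moves by parking one on b and pushing the robots between
  them over the branch vertex onto the right arm, so any permutation costs O(k^2) moves. Running
  the gathering backwards from the target configuration finishes the reconfiguration, in
  O(k |V'|) = O(k^4) moves since a meta-haven has O(k^3) vertices.\<close>

section \<open>Simple paths\<close>

lemma is_path_rev:
  assumes "is_path E p"
  shows "is_path E (rev p)"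
  unfolding is_path_def
proof (intro conjI allI impI)
  show "rev p \<noteq> []" "distinct (rev p)" using assms by (auto simp: is_path_def)
  fix i assume i: "Suc i < length (rev p)"
  have "{p ! (length p - Suc (Suc i)), p ! Suc (length p - Suc (Suc i))} \<in> E"
    using assms i by (auto simp: is_path_def)
  moreover have "Suc (length p - Suc (Suc i)) = length p - Suc i" using i by simp
  ultimately show "{rev p ! i, rev p ! Suc i} \<in> E" using i
    by (simp add: rev_nth insert_commute)
qed

lemma is_path_take: "is_path E p \<Longrightarrow> 0 < k \<Longrightarrow> is_path E (take k p)"
  unfolding is_path_def by auto

lemma is_path_drop: "is_path E p \<Longrightarrow> k < length p \<Longrightarrow> is_path E (drop k p)"
  unfolding is_path_def by (auto simp: add.commute)

lemma is_path_map:
  assumes "xs \<noteq> []" "distinct xs" "inj_on f (set xs)"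
    "\<And>i. Suc i < length xs \<Longrightarrow> {f (xs ! i), f (xs ! Suc i)} \<in> E"
  shows "is_path E (map f xs)"
  using assms by (auto simp: is_path_def distinct_map)

lemma is_path_append:
  assumes "is_path E p1" "is_path E p2" "set p1 \<inter> set p2 = {}" "{last p1, hd p2} \<in> E"
  shows "is_path E (p1 @ p2)"
  unfolding is_path_def
proof (intro conjI allI impI)
  have ne: "p1 \<noteq> []" "p2 \<noteq> []" using assms(1,2) by (auto simp: is_path_def)
  then show "p1 @ p2 \<noteq> []" by simp
  show "distinct (p1 @ p2)" using assms(1-3) by (simp add: is_path_def)
  fix i assume i: "Suc i < length (p1 @ p2)"
  consider "Suc i < length p1" | "Suc i = length p1" | "length p1 \<le> i" by linarith
  then show "{(p1 @ p2) ! i, (p1 @ p2) ! Suc i} \<in> E"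
  proof cases
    case 1
    then show ?thesis using assms(1) by (simp add: is_path_def nth_append)
  next
    case 2
    then have "i = length p1 - 1" by simp
    then have "(p1 @ p2) ! i = last p1" "(p1 @ p2) ! Suc i = hd p2"
      using ne by (simp_all add: nth_append last_conv_nth hd_conv_nth)
    then show ?thesis using assms(4) by simp
  next
    case 3
    then have "Suc i - length p1 = Suc (i - length p1)" "Suc (i - length p1) < length p2"
      using i by auto
    then show ?thesis using assms(2) 3 by (simp add: is_path_def nth_append)
  qed
qed

lemma is_path_Cons:
  assumes "is_path E p" "v \<notin> set p" "{v, hd p} \<in> E"
  shows "is_path E (v # p)"
  using is_path_append[of E "[v]" p] assms by (simp add: is_path_def)

lemma path_edges_subset: "is_path E p \<Longrightarrow> path_edges p \<subseteq> E"
  unfolding path_edges_def is_path_def by auto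

lemma is_path_path_edges_mono: "is_path E p \<Longrightarrow> path_edges p \<subseteq> E' \<Longrightarrow> is_path E' p"
  unfolding path_edges_def is_path_def by blast

lemma card_path_edges_le: "card (path_edges p) \<le> length p - 1"
proof -
  have "path_edges p = (\<lambda>i. {p ! i, p ! Suc i}) ` {..<length p - 1}"
    unfolding path_edges_def by auto
  then show ?thesis using card_image_le[of "{..<length p - 1}"] by simp
qed

lemma set_path_subset_Union:
  assumes "is_path E p" "2 \<le> length p"
  shows "set p \<subseteq> \<Union>E"
proof
  fix v assume "v \<in> set p"
  then obtain i where i: "i < length p" "p ! i = v" by (auto simp: in_set_conv_nth)
  show "v \<in> \<Union>E"
  proof (cases "Suc i < length p")
    case True
    then have "{p ! i, p ! Suc i} \<in> E" using assms by (simp add: is_path_def)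
    then show ?thesis using i by auto
  next
    case False
    then have "Suc (i - 1) < length p" "Suc (i - 1) = i" using i assms(2) by auto
    then have "{p ! (i - 1), p ! i} \<in> E" using assms(1) unfolding is_path_def by metis
    then show ?thesis using i by auto
  qed
qed

lemma nth_in_set_take_iff:
  "distinct p \<Longrightarrow> i < length p \<Longrightarrow> p ! i \<in> set (take k p) \<longleftrightarrow> i < k"
  by (auto simp: in_set_conv_nth nth_eq_iff_index_eq)

lemma nth_in_set_drop_iff:
  assumes "distinct p" "i < length p"
  shows "p ! i \<in> set (drop k p) \<longleftrightarrow> k \<le> i"
proof
  assume "p ! i \<in> set (drop k p)"
  then obtain l where "l < length p - k" "p ! i = p ! (k + l)" by (auto simp: in_set_conv_nth)
  then show "k \<le> i" using assms nth_eq_iff_index_eq by fastforce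
next
  assume "k \<le> i"
  then show "p ! i \<in> set (drop k p)"
    using assms(2) nth_mem[of "i - k" "drop k p"] by simp
qed

section \<open>Reachability by sliding moves\<close>

lemma sliding_move_along_path:
  assumes "is_path E p" "2 \<le> length p" "x \<in> R" "c x = hd p"
    "\<forall>y\<in>R. y \<noteq> x \<longrightarrow> c y \<notin> set p"
  shows "sliding_move E R c (c(x := last p))"
  unfolding sliding_move_def using assms by (intro bexI[of _ x] exI[of _ p]) auto

lemma sliding_move_rev: "sliding_move E R c c' \<Longrightarrow> sliding_move E R c' c"
  unfolding sliding_move_def
  by (metis (no_types, lifting) hd_rev is_path_rev last_rev length_rev set_rev)

lemma sliding_move_cong:
  "sliding_move E R c c' \<Longrightarrow> \<forall>x\<in>R. d x = c x \<Longrightarrow> \<forall>x\<in>R. d' x = c' x \<Longrightarrow> sliding_move E R d d'"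
  unfolding sliding_move_def by (metis (no_types, lifting))

text \<open>Configurations are only compared on the robot set R; the index bounds the number of moves.\<close>
inductive reach_within :: "'a set set \<Rightarrow> 'r set \<Rightarrow> ('r \<Rightarrow> 'a) \<Rightarrow> ('r \<Rightarrow> 'a) \<Rightarrow> nat \<Rightarrow> bool"
  for E R where
  reach_within_agree: "\<forall>x\<in>R. c x = c' x \<Longrightarrow> reach_within E R c c' n"
| reach_within_step: "sliding_move E R c c1 \<Longrightarrow> reach_within E R c1 c2 n \<Longrightarrow> reach_within E R c c2 (Suc n)"

lemma reach_within_refl: "reach_within E R c c n"
  by (simp add: reach_within_agree)

lemma reach_within_single: "sliding_move E R c c' \<Longrightarrow> reach_within E R c c' 1"
  using reach_within_step[OF _ reach_within_refl] by simp

lemma reach_within_mono: "reach_within E R c c' n \<Longrightarrow> n \<le> m \<Longrightarrow> reach_within E R c c' m"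
proof (induction arbitrary: m rule: reach_within.induct)
  case (reach_within_agree c c' n)
  then show ?case by (simp add: reach_within.reach_within_agree)
next
  case (reach_within_step c c1 c2 n)
  then obtain m' where "m = Suc m'" "n \<le> m'" by (metis Suc_le_D Suc_le_mono)
  then show ?case using reach_within_step by (simp add: reach_within.reach_within_step)
qed

lemma reach_within_cong_left:
  assumes "reach_within E R c c' n" "\<forall>x\<in>R. d x = c x"
  shows "reach_within E R d c' n"
  using assms(1)
proof cases
  case reach_within_agree
  then show ?thesis using assms(2) by (simp add: reach_within.reach_within_agree)
next
  case (reach_within_step c1 m)
  then show ?thesis
    using assms(2) sliding_move_cong[of E R c c1 d c1] by (simp add: reach_within.reach_within_step)
qed

lemma reach_within_trans:
  "reach_within E R c c1 n \<Longrightarrow> reach_within E R c1 c2 m \<Longrightarrow> reach_within E R c c2 (n + m)"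
proof (induction rule: reach_within.induct)
  case (reach_within_agree c c1 n)
  then show ?case by (metis le_add2 reach_within_cong_left reach_within_mono)
next
  case (reach_within_step c c' c1 n)
  then show ?case by (simp add: reach_within.reach_within_step)
qed

lemma reach_within_sym: "reach_within E R c c' n \<Longrightarrow> reach_within E R c' c n"
proof (induction rule: reach_within.induct)
  case (reach_within_agree c c' n)
  then show ?case by (simp add: reach_within.reach_within_agree)
next
  case (reach_within_step c c1 c2 n)
  then show ?case
    using reach_within_trans[OF _ reach_within_single[OF sliding_move_rev]] by fastforce
qed

lemma move_sequence_if_reach_within:
  assumes "reach_within E R c c' n"
  shows "\<exists>cs. move_sequence E R cs \<and> hd cs = c \<and> (\<forall>x\<in>R. last cs x = c' x) \<and> length cs - 1 \<le> n"
  using assms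
proof (induction rule: reach_within.induct)
  case (reach_within_agree c c' n)
  then show ?case by (intro exI[of _ "[c]"]) (simp add: move_sequence_def)
next
  case (reach_within_step c c1 c2 n)
  then obtain cs where cs: "move_sequence E R cs" "hd cs = c1" "\<forall>x\<in>R. last cs x = c2 x"
    "length cs - 1 \<le> n" by blast
  have "move_sequence E R (c # cs)"
    unfolding move_sequence_def
  proof (intro conjI allI impI)
    fix i assume "Suc i < length (c # cs)"
    then show "sliding_move E R ((c # cs) ! i) ((c # cs) ! Suc i)"
      using cs reach_within_step(1) unfolding move_sequence_def by (cases i) (auto simp: hd_conv_nth)
  qed simp
  then show ?case using cs by (intro exI[of _ "c # cs"]) (auto simp: move_sequence_def)
qed

section \<open>Gathering robots in a connected graph\<close>

definition config_on :: "'a set \<Rightarrow> 'r set \<Rightarrow> 'r set \<Rightarrow> ('r \<Rightarrow> 'a) \<Rightarrow> bool" where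
  "config_on V R S c \<longleftrightarrow> inj_on c R \<and> (\<forall>x\<in>R. c x \<in> V \<longleftrightarrow> x \<in> S)"

lemma config_on_update:
  assumes "config_on V R S c" "S \<subseteq> R" "x \<in> S" "v \<in> V" "v \<notin> c ` R"
  shows "config_on V R S (c(x := v))" "(c(x := v)) ` S = insert v (c ` S - {c x})"
    "\<forall>y\<in>R-S. (c(x := v)) y = c y"
proof -
  have inj: "inj_on c R" using assms(1) by (simp add: config_on_def)
  then show "config_on V R S (c(x := v))"
    using assms unfolding config_on_def by (auto intro: inj_on_fun_updI)
  have "c y \<noteq> c x" if "y \<in> S" "y \<noteq> x" for y
    using that assms(2,3) inj by (metis inj_onD subsetD)
  then show "(c(x := v)) ` S = insert v (c ` S - {c x})" using assms(3) by auto
  show "\<forall>y\<in>R-S. (c(x := v)) y = c y" using assms(3) by auto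
qed

lemma config_on_override_on:
  assumes "config_on V R S c" "inj_on \<iota> S" "\<iota> ` S \<subseteq> V"
  shows "config_on V R S (override_on c \<iota> S)"
proof -
  have inside: "\<forall>x\<in>R. override_on c \<iota> S x \<in> V \<longleftrightarrow> x \<in> S"
    using assms(1,3) by (auto simp: config_on_def override_on_def)
  have "inj_on (override_on c \<iota> S) R"
  proof (rule inj_onI)
    fix x y assume xy: "x \<in> R" "y \<in> R" "override_on c \<iota> S x = override_on c \<iota> S y"
    then have "x \<in> S \<longleftrightarrow> y \<in> S" using inside by metis
    then show "x = y"
      using xy assms(1,2) by (cases "x \<in> S") (auto simp: override_on_def config_on_def dest: inj_onD)
  qed
  with inside show ?thesis by (simp add: config_on_def)
qed

lemma sliding_move_back_to_start:
  assumes "is_path E p" "hd p \<notin> c ` R" "x \<in> R" "c x = p ! i" "0 < i" "i < length p"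
    and inj: "inj_on c R" and before: "\<And>l. 0 < l \<Longrightarrow> l < i \<Longrightarrow> p ! l \<notin> c ` R"
  shows "sliding_move E R c (c(x := hd p))"
proof -
  define retreat where "retreat = rev (take (Suc i) p)"
  have pne: "p \<noteq> []" using assms(6) by auto
  have path: "is_path E retreat"
    unfolding retreat_def using assms(1) by (intro is_path_rev is_path_take) auto
  have retreat: "2 \<le> length retreat" "hd retreat = p ! i" "last retreat = hd p"
    using assms(5,6) pne by (simp_all add: retreat_def hd_rev last_rev take_Suc_conv_app_nth hd_conv_nth)
  have "\<forall>y\<in>R. y \<noteq> x \<longrightarrow> c y \<notin> set retreat"
  proof (intro ballI impI notI)
    fix y assume y: "y \<in> R" "y \<noteq> x" "c y \<in> set retreat"
    then obtain l where l: "l < Suc i" "c y = p ! l"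
      using assms(6) by (auto simp: retreat_def in_set_conv_nth)
    have "c y \<in> c ` R" using y(1) by simp
    then have "p ! l \<in> c ` R" "l \<noteq> 0" using l(2) assms(2) pne by (auto simp: hd_conv_nth)
    moreover have "l \<noteq> i" using l assms(3,4) y inj by (metis inj_onD)
    ultimately show False using before[of l] l(1) by (simp add: less_Suc_eq)
  qed
  from sliding_move_along_path[OF path retreat(1) assms(3) _ this] show ?thesis
    using assms(4) retreat(2,3) by simp
qed

text \<open>The first robot on p after its free start vertex slides back onto that vertex,
  freeing its own vertex, from which the argument continues along the rest of p.\<close>
lemma reach_within_push_along_path:
  assumes "config_on V R S c" "S \<subseteq> R" "is_path E p" "set p \<subseteq> V"
    "hd p \<notin> c ` R" "last p \<in> c ` S"
  shows "\<exists>c'. reach_within E R c c' (length p) \<and> config_on V R S c' \<and>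
    c' ` S = insert (hd p) (c ` S - {last p}) \<and> (\<forall>x\<in>R-S. c' x = c x)"
  using assms
proof (induction "length p" arbitrary: p c rule: less_induct)
  case less
  have inj: "inj_on c R" and inV: "\<forall>x\<in>R. c x \<in> V \<longleftrightarrow> x \<in> S"
    using less.prems(1) by (auto simp: config_on_def)
  have pne: "p \<noteq> []" and dist: "distinct p" using less.prems(3) by (auto simp: is_path_def)
  have hd_ne_last: "hd p \<noteq> last p" using less.prems(2,5,6) by auto
  have "length p - 1 \<noteq> 0"
    using hd_ne_last pne by (metis hd_conv_nth last_conv_nth)
  then have ex: "\<exists>i. 0 < i \<and> i < length p \<and> p ! i \<in> c ` R"
    using pne less.prems(2,6) by (intro exI[of _ "length p - 1"]) (auto simp: last_conv_nth)
  define i where "i = (LEAST i. 0 < i \<and> i < length p \<and> p ! i \<in> c ` R)"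
  have i: "0 < i" "i < length p" "p ! i \<in> c ` R" using LeastI_ex[OF ex] unfolding i_def by auto
  have before_i: "p ! l \<notin> c ` R" if "0 < l" "l < i" for l
    using not_less_Least[of l "\<lambda>i. 0 < i \<and> i < length p \<and> p ! i \<in> c ` R"] that i(2)
    unfolding i_def by simp
  obtain x where x: "x \<in> R" "c x = p ! i" using i(3) by auto
  have xS: "x \<in> S" using x less.prems(4) inV i(2) by (metis nth_mem subsetD)
  have hd_ne_i: "hd p \<noteq> p ! i"
    using nth_eq_iff_index_eq[OF dist, of 0 i] i pne by (simp add: hd_conv_nth)
  define c1 where "c1 = c(x := hd p)"
  have slide: "sliding_move E R c c1"
    unfolding c1_def by (rule sliding_move_back_to_start[OF less.prems(3,5) x i(1,2) inj before_i])
  have "hd p \<in> V" using less.prems(4) pne by auto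
  note c1 = config_on_update[OF less.prems(1,2) xS this less.prems(5), folded c1_def, unfolded x(2)]
  show ?case
  proof (cases "i = length p - 1")
    case True
    then have "last p = p ! i" using pne by (simp add: last_conv_nth)
    then show ?thesis
      using reach_within_mono[OF reach_within_single[OF slide], of "length p"] i c1 by auto
  next
    case False
    define p' where "p' = drop i p"
    have shorter: "length p' < length p" using i by (simp add: p'_def)
    have p': "is_path E p'" "set p' \<subseteq> V" "hd p' = p ! i" "last p' = last p"
      using less.prems(3,4) i by (auto simp: p'_def is_path_drop hd_drop_conv_nth dest: in_set_dropD)
    have last_ne_i: "last p \<noteq> p ! i"
      using nth_eq_iff_index_eq[OF dist, of "length p - 1" i] i False pne by (simp add: last_conv_nth)
    have "hd p' \<notin> c1 ` R"
      using p'(3) hd_ne_i x inj unfolding c1_def by (auto dest: inj_onD)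
    moreover have "last p' \<in> c1 ` S" using c1(2) p'(4) less.prems(6) last_ne_i by auto
    ultimately obtain c' where c': "reach_within E R c1 c' (length p')" "config_on V R S c'"
      "c' ` S = insert (hd p') (c1 ` S - {last p'})" "\<forall>y\<in>R-S. c' y = c1 y"
      using less.hyps[OF shorter c1(1) less.prems(2) p'(1,2)] by blast
    have "reach_within E R c c' (1 + length p')"
      by (rule reach_within_trans[OF reach_within_single[OF slide] c'(1)])
    then have "reach_within E R c c' (length p)" by (rule reach_within_mono) (use shorter in simp)
    moreover have "p ! i \<in> c ` S" using xS x by (metis imageI)
    then have "c' ` S = insert (hd p) (c ` S - {last p})"
      unfolding c'(3) c1(2) p'(3,4) using hd_ne_i last_ne_i hd_ne_last by auto
    ultimately show ?thesis using c'(2,4) c1(3) by auto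
  qed
qed

lemma reach_within_gather_step:
  assumes conn: "connected_graph V E" and "finite V" "config_on V R S c" "S \<subseteq> R" "D \<subseteq> V"
    and v: "v \<in> c ` S" "v \<notin> D" and u: "u \<in> D" "u \<notin> c ` S"
  shows "\<exists>c'. reach_within E R c c' (card V) \<and> config_on V R S c' \<and>
    c' ` S - D = (c ` S - D) - {v} \<and> (\<forall>x\<in>R-S. c' x = c x)"
proof -
  have inV: "\<forall>x\<in>R. c x \<in> V \<longleftrightarrow> x \<in> S" using assms(3) by (simp add: config_on_def)
  then have "u \<in> V" "v \<in> V" "u \<notin> c ` R" using u v assms(4,5) by auto
  moreover obtain p where p: "is_path E p" "set p \<subseteq> V" "hd p = u" "last p = v"
    using conn \<open>u \<in> V\<close> \<open>v \<in> V\<close> unfolding connected_graph_def by blast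
  ultimately obtain c' where c': "reach_within E R c c' (length p)" "config_on V R S c'"
    "c' ` S = insert u (c ` S - {v})" "\<forall>x\<in>R-S. c' x = c x"
    using reach_within_push_along_path[OF assms(3,4) p(1,2)] p(3,4) v(1) by auto
  have "length p = card (set p)" using p(1) by (simp add: is_path_def distinct_card)
  also have "\<dots> \<le> card V" using card_mono[OF assms(2) p(2)] .
  finally have "reach_within E R c c' (card V)" by (rule reach_within_mono[OF c'(1)])
  moreover have "c' ` S - D = (c ` S - D) - {v}" using c'(3) u(1) by auto
  ultimately show ?thesis using c'(2,4) by blast
qed

lemma reach_within_gather:
  assumes conn: "connected_graph V E" and "finite V" "config_on V R S c" "S \<subseteq> R"
    and D: "D \<subseteq> V" "card D = card S"
  shows "\<exists>c'. reach_within E R c c' (card S * card V) \<and> config_on V R S c' \<and> c' ` S = D \<and>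
    (\<forall>x\<in>R-S. c' x = c x)"
proof -
  have finD: "finite D" using assms(2) D(1) finite_subset by blast
  have card_image_S: "card (d ` S) = card S" if "config_on V R S d" for d
    using that assms(4) by (metis card_image config_on_def inj_on_subset)
  have onto_D: "d ` S = D" if "config_on V R S d" "d ` S - D = {}" for d
    using card_subset_eq[OF finD] card_image_S[OF that(1)] D(2) that(2) by auto
  have "inj_on c S" "c ` S \<subseteq> V" using assms(3,4) inj_on_subset by (auto simp: config_on_def)
  then have finS: "finite S" using assms(2) by (meson finite_imageD finite_subset)
  have gathered: "\<exists>d'. reach_within E R d d' (n * card V) \<and> config_on V R S d' \<and> d' ` S = D \<and>
      (\<forall>x\<in>R-S. d' x = d x)"
    if "config_on V R S d" "card (d ` S - D) \<le> n" for n d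
    using that
  proof (induction n arbitrary: d)
    case 0
    then have "d ` S - D = {}" using finS by simp
    then show ?case using 0 onto_D by (intro exI[of _ d]) (auto intro: reach_within_refl)
  next
    case (Suc n)
    show ?case
    proof (cases "d ` S - D = {}")
      case True
      then show ?thesis using Suc.prems onto_D by (intro exI[of _ d]) (auto intro: reach_within_refl)
    next
      case False
      then obtain v where v: "v \<in> d ` S" "v \<notin> D" by auto
      have "\<not> D \<subseteq> d ` S"
        using card_subset_eq[of "d ` S" D] finS card_image_S Suc.prems(1) D(2) v by auto
      then obtain u where "u \<in> D" "u \<notin> d ` S" by auto
      then obtain d1 where d1: "reach_within E R d d1 (card V)" "config_on V R S d1"
        "d1 ` S - D = (d ` S - D) - {v}" "\<forall>x\<in>R-S. d1 x = d x"
        using reach_within_gather_step[OF conn assms(2) Suc.prems(1) assms(4) D(1) v] by blast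
      have "card (d1 ` S - D) = card (d ` S - D) - 1" using d1(3) v finS by simp
      then have "card (d1 ` S - D) \<le> n" using Suc.prems(2) by linarith
      then obtain d' where d': "reach_within E R d1 d' (n * card V)" "config_on V R S d'"
        "d' ` S = D" "\<forall>x\<in>R-S. d' x = d1 x"
        using Suc.IH[OF d1(2)] by blast
      then show ?thesis using reach_within_trans[OF d1(1) d'(1)] d1(4) by auto
    qed
  qed
  have "card (c ` S - D) \<le> card S"
    using card_mono[OF finite_imageI[OF finS] Diff_subset] card_image_le[OF finS] by (rule le_trans)
  from gathered[OF assms(3) this] show ?thesis .
qed

lemma config_on_swap:
  assumes "config_on V R S c" "S \<subseteq> R" "x \<in> S" "y \<in> S"
  shows "config_on V R S (c(x := c y, y := c x))"
  using assms unfolding config_on_def inj_on_def by (auto split: if_splits)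

lemma image_swap: "x \<in> S \<Longrightarrow> y \<in> S \<Longrightarrow> (c(x := c y, y := c x)) ` S = c ` S"
  by (auto simp: image_iff)

section \<open>Reconfiguration on a T-junction\<close>

locale t_junction =
  fixes E :: "'a set set" and Q :: "'a list" and b :: 'a and m s :: nat
  assumes path: "is_path E Q" and b_notin: "b \<notin> set Q" and b_edge: "{Q ! m, b} \<in> E"
    and left_arm: "s \<le> m" and right_arm: "m + s < length Q"
begin

text \<open>The vertices of the junction are numbered 0, ..., length Q: node 0 is the pendant vertex b,
  node n > 0 is Q ! (n - 1); so node (Suc m) is the branch vertex.\<close>
definition node :: "nat \<Rightarrow> 'a" where
  "node n = (if n = 0 then b else Q ! (n - 1))"

definition node_adj :: "nat \<Rightarrow> nat \<Rightarrow> bool" where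
  "node_adj n n' \<longleftrightarrow> (1 \<le> n \<and> 1 \<le> n' \<and> (n' = Suc n \<or> n = Suc n')) \<or>
     (n = 0 \<and> n' = Suc m) \<or> (n = Suc m \<and> n' = 0)"

definition slots :: "nat set" where
  "slots = {Suc m - s..m}"

definition home :: "'a set" where
  "home = node ` slots"

lemma inj_on_node: "inj_on node {..length Q}"
proof (rule inj_onI)
  fix n n' assume n: "n \<in> {..length Q}" "n' \<in> {..length Q}" "node n = node n'"
  have "distinct Q" using path by (simp add: is_path_def)
  moreover have "Q ! (k - 1) \<noteq> b" if "0 < k" "k \<le> length Q" for k
    using b_notin that nth_mem[of "k - 1" Q] by auto
  ultimately show "n = n'"
    using n unfolding node_def by (auto simp: nth_eq_iff_index_eq split: if_splits)
qed

lemma is_path_map_node: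
  assumes "ns \<noteq> []" "distinct ns" "\<forall>n\<in>set ns. n \<le> length Q"
    "\<And>i. Suc i < length ns \<Longrightarrow> node_adj (ns ! i) (ns ! Suc i)"
  shows "is_path E (map node ns)"
proof (rule is_path_map[OF assms(1,2)])
  show "inj_on node (set ns)" using inj_on_subset[OF inj_on_node] assms(3) by auto
  fix i assume i: "Suc i < length ns"
  have bounds: "ns ! i \<le> length Q" "ns ! Suc i \<le> length Q" using assms(3) i by auto
  have Q_edge: "{Q ! k, Q ! Suc k} \<in> E" if "Suc k < length Q" for k
    using path that by (simp add: is_path_def)
  consider (up) "1 \<le> ns ! i" "ns ! Suc i = Suc (ns ! i)"
    | (down) "1 \<le> ns ! Suc i" "ns ! i = Suc (ns ! Suc i)"
    | (to_b) "ns ! i = Suc m" "ns ! Suc i = 0" | (from_b) "ns ! i = 0" "ns ! Suc i = Suc m"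
    using assms(4)[OF i] unfolding node_adj_def by auto
  then show "{node (ns ! i), node (ns ! Suc i)} \<in> E"
  proof cases
    case up
    then show ?thesis using Q_edge[of "ns ! i - 1"] bounds unfolding node_def by auto
  next
    case down
    then show ?thesis using Q_edge[of "ns ! Suc i - 1"] bounds unfolding node_def
      by (auto simp: insert_commute)
  qed (use b_edge in \<open>auto simp: node_def insert_commute\<close>)
qed

lemma is_path_node_upt:
  "1 \<le> a \<Longrightarrow> a < e \<Longrightarrow> e \<le> Suc (length Q) \<Longrightarrow> is_path E (map node [a..<e])"
  by (intro is_path_map_node) (auto simp: node_adj_def)

lemma is_path_node_downt:
  "1 \<le> a \<Longrightarrow> a < e \<Longrightarrow> e \<le> Suc (length Q) \<Longrightarrow> is_path E (map node (rev [a..<e]))"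
  using is_path_rev[OF is_path_node_upt] by (simp add: rev_map)

lemma is_path_node_from_b:
  assumes "1 \<le> a" "a \<le> Suc m"
  shows "is_path E (map node (0 # rev [a..<m + 2]))"
proof -
  have path: "is_path E (map node (rev [a..<m + 2]))"
    using assms right_arm by (intro is_path_node_downt) auto
  have notin: "b \<notin> set (map node (rev [a..<m + 2]))"
    using assms b_notin right_arm by (auto simp: node_def)
  have "hd (map node (rev [a..<m + 2])) = Q ! m" using assms by (simp add: node_def hd_map hd_rev)
  then have "{b, hd (map node (rev [a..<m + 2]))} \<in> E" using b_edge by (simp add: insert_commute)
  from is_path_Cons[OF path notin this] show ?thesis by (simp add: node_def)
qed

lemma slots_le: "n \<in> slots \<Longrightarrow> n \<le> length Q"
  using right_arm by (simp add: slots_def)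

lemma inj_on_node_slots: "inj_on node slots"
  using inj_on_subset[OF inj_on_node] slots_le by auto

lemma card_home: "card home = s"
  using inj_on_node_slots left_arm by (simp add: home_def card_image slots_def)

end

locale t_junction_robots = t_junction E Q b m s
  for E :: "'a set set" and Q b m s +
  fixes V :: "'a set" and R S :: "'r set"
  assumes Q_subset: "set Q \<subseteq> V" and b_in: "b \<in> V"
    and S_subset: "S \<subseteq> R" and finite_S: "finite S" and card_S: "card S = s"
begin

lemma node_in: "n \<le> length Q \<Longrightarrow> node n \<in> V"
  using Q_subset b_in unfolding node_def by (auto simp: subset_iff)

lemma home_subset: "home \<subseteq> V"
  using node_in slots_le by (auto simp: home_def)

end

text \<open>The robots of S are labelled bijectively by the slots; a slot map f describes the configuration
  in which robot y \<in> S sits on node f (label y) and the robots outside S stay where c puts them.\<close>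
locale t_junction_labelling = t_junction_robots E Q b m s V R S
  for E :: "'a set set" and Q b m s V and R S :: "'r set" +
  fixes c :: "'r \<Rightarrow> 'a" and label :: "'r \<Rightarrow> nat"
  assumes outside: "\<forall>x\<in>R. c x \<in> V \<longleftrightarrow> x \<in> S" and label: "bij_betw label S slots"
begin

definition placed :: "(nat \<Rightarrow> nat) \<Rightarrow> 'r \<Rightarrow> 'a" where
  "placed f y = (if y \<in> S then node (f (label y)) else c y)"

lemma label_in: "y \<in> S \<Longrightarrow> label y \<in> slots"
  using label by (metis bij_betwE)

lemma placed_cong: "\<forall>n\<in>slots. f n = g n \<Longrightarrow> placed f = placed g"
  using label_in by (auto simp: placed_def fun_eq_iff)

lemma reach_within_node_move:
  assumes \<pi>: "is_path E (map node \<pi>)" "2 \<le> length \<pi>" "\<forall>n\<in>set \<pi>. n \<le> length Q"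
    and a: "a \<in> slots" "hd \<pi> = f a"
    and f: "\<forall>n\<in>slots. f n \<le> length Q" "\<forall>n\<in>slots. n \<noteq> a \<longrightarrow> f n \<notin> set \<pi>"
    and g: "\<forall>n\<in>slots. g n = (f(a := last \<pi>)) n"
  shows "reach_within E R (placed f) (placed g) 1"
proof -
  obtain x where x: "x \<in> S" "label x = a" using a(1) label by (metis bij_betw_imp_surj_on imageE)
  have \<pi>_ne: "\<pi> \<noteq> []" using \<pi>(2) by auto
  have free: "\<forall>y\<in>R. y \<noteq> x \<longrightarrow> placed f y \<notin> set (map node \<pi>)"
  proof (intro ballI impI)
    fix y assume y: "y \<in> R" "y \<noteq> x"
    show "placed f y \<notin> set (map node \<pi>)"
    proof (cases "y \<in> S")
      case True
      then have "label y \<in> slots" "label y \<noteq> a"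
        using label x y by (auto simp: bij_betw_def inj_on_def)
      then have "f (label y) \<notin> set \<pi>" "f (label y) \<le> length Q" using f by auto
      then show ?thesis using True \<pi>(3) inj_on_node by (auto simp: placed_def inj_on_def)
    next
      case False
      then show ?thesis using y outside \<pi>(3) node_in by (auto simp: placed_def)
    qed
  qed
  have "placed f x = hd (map node \<pi>)" using x a \<pi>_ne by (simp add: placed_def hd_map)
  then have "sliding_move E R (placed f) ((placed f)(x := last (map node \<pi>)))"
    using sliding_move_along_path[OF \<pi>(1) _ _ _ free] \<pi>(2) x S_subset by auto
  moreover have "(placed f)(x := last (map node \<pi>)) = placed (f(a := last \<pi>))"
    using x label \<pi>_ne by (auto simp: placed_def fun_eq_iff last_map bij_betw_def inj_on_def)
  ultimately show ?thesis using placed_cong[OF g] reach_within_single by metis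
qed

text \<open>Swapping the robots in slots m and m - i: the robot in slot m is parked on b, the i - 1
  robots between the two slots are pushed over the branch vertex onto the right arm, the robot
  in slot m - i passes the branch vertex, the parked robot moves into slot m - i, the other one
  is parked on b, and the pushed robots and the parked one return. The slot maps
  parked_shifted i J and swapped_shifted i J describe the configurations after J pushes and after
  J returns.\<close>
definition parked_shifted :: "nat \<Rightarrow> nat \<Rightarrow> nat \<Rightarrow> nat" where
  "parked_shifted i J n = (if n = m then 0 else if m - J \<le> n \<and> n < m then n + i + 2 else n)"

definition swapped_shifted :: "nat \<Rightarrow> nat \<Rightarrow> nat \<Rightarrow> nat" where
  "swapped_shifted i J n = (if n = m then m - i else if n = m - i then 0
     else if m - i + J < n \<and> n < m then n + i + 2 else n)"

lemma reach_within_parked_shifted: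
  assumes "1 \<le> i" "i < s" "J < i"
  shows "reach_within E R (placed (parked_shifted i 0)) (placed (parked_shifted i J)) J"
  using assms(3)
proof (induction J)
  case 0
  show ?case by (rule reach_within_refl)
next
  case (Suc J)
  have "reach_within E R (placed (parked_shifted i J)) (placed (parked_shifted i (Suc J))) 1"
  proof (rule reach_within_node_move[of "[m - Suc J..<m + i + 2 - J]" "m - Suc J"])
    show "is_path E (map node [m - Suc J..<m + i + 2 - J])"
      using Suc assms left_arm right_arm by (intro is_path_node_upt) auto
  qed (use Suc assms left_arm right_arm in \<open>auto simp: parked_shifted_def slots_def\<close>)
  from reach_within_trans[OF Suc.IH[OF Suc_lessD[OF Suc.prems]] this] show ?case by simp
qed

lemma reach_within_swapped_shifted:
  assumes "1 \<le> i" "i < s" "J < i"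
  shows "reach_within E R (placed (swapped_shifted i 0)) (placed (swapped_shifted i J)) J"
  using assms(3)
proof (induction J)
  case 0
  show ?case by (rule reach_within_refl)
next
  case (Suc J)
  have "reach_within E R (placed (swapped_shifted i J)) (placed (swapped_shifted i (Suc J))) 1"
  proof (rule reach_within_node_move[of "rev [m - i + Suc J..<m - i + Suc J + i + 3]" "m - i + Suc J"])
    show "is_path E (map node (rev [m - i + Suc J..<m - i + Suc J + i + 3]))"
      using Suc assms left_arm right_arm by (intro is_path_node_downt) auto
  qed (use Suc assms left_arm right_arm in \<open>auto simp: swapped_shifted_def slots_def last_rev hd_rev\<close>)
  from reach_within_trans[OF Suc.IH[OF Suc_lessD[OF Suc.prems]] this] show ?case by simp
qed

lemma reach_within_swap_slots:
  assumes i: "1 \<le> i" "i < s"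
  shows "reach_within E R (placed id) (placed (id(m := m - i, m - i := m))) (2 * i + 3)"
proof -
  note arms = left_arm right_arm
  have s1: "reach_within E R (placed id) (placed (parked_shifted i 0)) 1"
  proof (rule reach_within_node_move[of "[m, Suc m, 0]" m])
    show "is_path E (map node [m, Suc m, 0])" using i arms
      by (intro is_path_map_node) (auto simp: node_adj_def nth_Cons' less_Suc_eq)
  qed (use i arms in \<open>auto simp: parked_shifted_def slots_def\<close>)
  have s2: "reach_within E R (placed (parked_shifted i 0)) (placed (parked_shifted i (i - 1))) (i - 1)"
    using reach_within_parked_shifted[OF i, of "i - 1"] i by simp
  define f3 where "f3 = (parked_shifted i (i - 1))(m - i := m + 2)"
  have s3: "reach_within E R (placed (parked_shifted i (i - 1))) (placed f3) 1"
  proof (rule reach_within_node_move[of "[m - i..<m + 3]" "m - i"])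
    show "is_path E (map node [m - i..<m + 3])" using i arms by (intro is_path_node_upt) auto
  qed (use i arms in \<open>auto simp: parked_shifted_def f3_def slots_def\<close>)
  define f4 where "f4 = f3(m := m - i)"
  have s4: "reach_within E R (placed f3) (placed f4) 1"
  proof (rule reach_within_node_move[of "0 # rev [m - i..<m + 2]" m])
    show "is_path E (map node (0 # rev [m - i..<m + 2]))" using i arms by (intro is_path_node_from_b) auto
  qed (use i arms in \<open>auto simp: parked_shifted_def f3_def f4_def slots_def last_rev\<close>)
  define f5 where "f5 = f4(m - i := 0)"
  have s5: "reach_within E R (placed f4) (placed f5) 1"
  proof (rule reach_within_node_move[of "[Suc (Suc m), Suc m, 0]" "m - i"])
    show "is_path E (map node [Suc (Suc m), Suc m, 0])" using i arms
      by (intro is_path_map_node) (auto simp: node_adj_def nth_Cons' less_Suc_eq)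
  qed (use i arms in \<open>auto simp: parked_shifted_def f3_def f4_def f5_def slots_def\<close>)
  have "placed f5 = placed (swapped_shifted i 0)"
    by (rule placed_cong)
      (use i arms in \<open>auto simp: parked_shifted_def f3_def f4_def f5_def swapped_shifted_def slots_def\<close>)
  then have s6: "reach_within E R (placed f5) (placed (swapped_shifted i (i - 1))) (i - 1)"
    using reach_within_swapped_shifted[OF i, of "i - 1"] i by simp
  have s7: "reach_within E R (placed (swapped_shifted i (i - 1))) (placed (id(m := m - i, m - i := m))) 1"
  proof (rule reach_within_node_move[of "[0, Suc m, m]" "m - i"])
    show "is_path E (map node [0, Suc m, m])" using i arms
      by (intro is_path_map_node) (auto simp: node_adj_def nth_Cons' less_Suc_eq)
  qed (use i arms in \<open>auto simp: swapped_shifted_def slots_def\<close>)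
  have "reach_within E R (placed id) (placed (id(m := m - i, m - i := m)))
      (1 + (i - 1) + 1 + 1 + 1 + (i - 1) + 1)"
    using reach_within_trans[OF reach_within_trans[OF reach_within_trans[OF reach_within_trans[OF
          reach_within_trans[OF reach_within_trans[OF s1 s2] s3] s4] s5] s6] s7] .
  then show ?thesis by (rule reach_within_mono) (use i in simp)
qed

end

context t_junction_robots
begin

lemma reach_within_swap_with_top:
  assumes c: "config_on V R S c" "c ` S = home"
    and t: "t \<in> S" "c t = node m" and u: "u \<in> S" "u \<noteq> t"
  shows "reach_within E R c (c(t := c u, u := c t)) (2 * s + 3)"
proof -
  define label where "label = the_inv_into slots node \<circ> c"
  have c_S: "bij_betw c S home"
    using c S_subset by (auto simp: bij_betw_def config_on_def intro: inj_on_subset)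
  have "bij_betw (the_inv_into slots node) home slots"
    unfolding home_def by (rule bij_betw_the_inv_into[OF inj_on_imp_bij_betw[OF inj_on_node_slots]])
  then have bij: "bij_betw label S slots" unfolding label_def using c_S bij_betw_trans by blast
  have node_label: "node (label y) = c y" if "y \<in> S" for y
    using that c(2) f_the_inv_into_f[OF inj_on_node_slots] by (force simp: label_def home_def)
  interpret t_junction_labelling E Q b m s V R S c label
    using c(1) bij by unfold_locales (auto simp: config_on_def)
  have slots: "label t \<in> slots" "label u \<in> slots" "label u \<noteq> label t"
    using bij t u by (auto simp: bij_betw_def inj_on_def)
  have "node (label t) = node m" using node_label t by simp
  moreover have "m \<in> slots" using slots(1) by (auto simp: slots_def)
  ultimately have lt: "label t = m" using inj_onD[OF inj_on_node_slots _ slots(1)] by blast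
  define i where "i = m - label u"
  have i: "1 \<le> i" "i < s" "label u = m - i"
    using slots(2,3) lt left_arm by (auto simp: i_def slots_def)
  have swapped: "placed (id(m := m - i, m - i := m)) y = (c(t := c u, u := c t)) y" for y
  proof (cases "y \<in> S")
    case True
    have "label y = m \<longleftrightarrow> y = t" "label y = m - i \<longleftrightarrow> y = u"
      using inj_onD[OF bij_betw_imp_inj_on[OF bij]] True t(1) u(1) lt i(3) by auto
    moreover have "m - i \<noteq> m" using i left_arm by simp
    ultimately show ?thesis
      using True t(1) u node_label[OF True] node_label[OF t(1)] node_label[OF u(1)] lt i(3)
      by (auto simp: placed_def)
  next
    case False
    then show ?thesis using t(1) u(1) by (auto simp: placed_def)
  qed
  have "placed id = c" using node_label by (simp add: placed_def fun_eq_iff)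
  moreover have "placed (id(m := m - i, m - i := m)) = c(t := c u, u := c t)"
    using swapped by (rule ext)
  ultimately have "reach_within E R c (c(t := c u, u := c t)) (2 * i + 3)"
    using reach_within_swap_slots[OF i(1,2)] by simp
  then show ?thesis by (rule reach_within_mono) (use i in simp)
qed

text \<open>Any two robots are exchanged through the one in slot m.\<close>
lemma reach_within_swap:
  assumes c: "config_on V R S c" "c ` S = home" and xy: "x \<in> S" "y \<in> S" "x \<noteq> y"
  shows "reach_within E R c (c(x := c y, y := c x)) (3 * (2 * s + 3))"
proof -
  have "s \<noteq> 0" using xy(1) finite_S card_S by (auto simp: card_gt_0_iff)
  then have "node m \<in> home" using left_arm by (auto simp: home_def slots_def)
  then obtain t where t: "t \<in> S" "c t = node m" using c(2) by (metis imageE)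
  have swap_t: "reach_within E R d (d(t' := d u, u := d t')) (3 * (2 * s + 3))"
    if "config_on V R S d" "d ` S = home" "t' \<in> S" "d t' = node m" "u \<in> S" "u \<noteq> t'" for d t' u
    using reach_within_mono[OF reach_within_swap_with_top[OF that]] by simp
  consider "x = t" | "y = t" | "x \<noteq> t" "y \<noteq> t" by blast
  then show ?thesis
  proof cases
    case 1
    then show ?thesis using swap_t[OF c t xy(2)] xy(3) by simp
  next
    case 2
    then show ?thesis using swap_t[OF c t xy(1)] xy(3) by (simp add: fun_upd_twist)
  next
    case 3
    define c1 where "c1 = c(t := c x, x := c t)"
    define c2 where "c2 = c1(x := c1 y, y := c1 x)"
    define c3 where "c3 = c2(y := c2 t, t := c2 y)"
    have "c1 ` S = c ` S" unfolding c1_def by (rule image_swap[OF t(1) xy(1)])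
    then have c1: "config_on V R S c1" "c1 ` S = home" "c1 x = node m"
      using config_on_swap[OF c(1) S_subset t(1) xy(1)] c(2) t 3 by (simp_all add: c1_def)
    have "c2 ` S = c1 ` S" unfolding c2_def by (rule image_swap[OF xy(1,2)])
    then have c2: "config_on V R S c2" "c2 ` S = home" "c2 y = node m"
      using config_on_swap[OF c1(1) S_subset xy(1,2)] c1(2,3) xy(3) by (simp_all add: c2_def)
    have "reach_within E R c c1 (2 * s + 3)"
      unfolding c1_def using reach_within_swap_with_top[OF c t xy(1)] 3(1) by simp
    moreover have "reach_within E R c1 c2 (2 * s + 3)"
      unfolding c2_def using reach_within_swap_with_top[OF c1(1,2) xy(1) c1(3) xy(2)] xy(3) by simp
    moreover have "reach_within E R c2 c3 (2 * s + 3)"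
      unfolding c3_def using reach_within_swap_with_top[OF c2(1,2) xy(2) c2(3) t(1)] 3(2) by simp
    ultimately have "reach_within E R c c3 (3 * (2 * s + 3))"
      using reach_within_trans[of E R c c1 _ c2] reach_within_trans[of E R c c2 _ c3] by fastforce
    moreover have "c3 = c(x := c y, y := c x)"
      using 3 xy(3) by (auto simp: c3_def c2_def c1_def fun_eq_iff)
    ultimately show ?thesis by simp
  qed
qed

lemma reach_within_permute_home:
  assumes c: "config_on V R S c" "c ` S = home" and c': "config_on V R S c'" "c' ` S = home"
    and out: "\<forall>x\<in>R-S. c' x = c x"
  shows "reach_within E R c c' (s * (3 * (2 * s + 3)))"
proof -
  define K where "K = 3 * (2 * s + 3)"
  have agree: "\<forall>x\<in>R. d x = c' x" if "{x\<in>S. d x \<noteq> c' x} = {}" "\<forall>x\<in>R-S. d x = c x" for d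
  proof
    fix x assume "x \<in> R"
    then show "d x = c' x" using that out by (cases "x \<in> S") auto
  qed
  have "reach_within E R d c' (n * K)"
    if "config_on V R S d" "d ` S = home" "\<forall>x\<in>R-S. d x = c x" "card {x\<in>S. d x \<noteq> c' x} \<le> n"
    for n d
    using that
  proof (induction n arbitrary: d)
    case 0
    then have "{x\<in>S. d x \<noteq> c' x} = {}" using card_0_eq[of "{x\<in>S. d x \<noteq> c' x}"] finite_S by simp
    then show ?case by (rule reach_within_agree[OF agree[OF _ 0(3)]])
  next
    case (Suc n)
    show ?case
    proof (cases "{x\<in>S. d x \<noteq> c' x} = {}")
      case True
      then show ?thesis by (rule reach_within_agree[OF agree[OF _ Suc.prems(3)]])
    next
      case False
      then obtain x where x: "x \<in> S" "d x \<noteq> c' x" by auto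
      then obtain y where y: "y \<in> S" "d y = c' x" using Suc.prems(2) c'(2) by (metis imageE image_eqI)
      define d1 where "d1 = d(x := d y, y := d x)"
      have xy: "x \<noteq> y" using x y by auto
      have "c' y \<noteq> c' x" using c'(1) x y xy S_subset by (auto simp: config_on_def dest: inj_onD)
      then have "{z\<in>S. d1 z \<noteq> c' z} \<subseteq> {z\<in>S. d z \<noteq> c' z} - {x}"
        using x y xy by (auto simp: d1_def)
      then have "card {z\<in>S. d1 z \<noteq> c' z} \<le> card {z\<in>S. d z \<noteq> c' z} - 1"
        using finite_S x card_mono[of "{z\<in>S. d z \<noteq> c' z} - {x}"] by fastforce
      then have "card {z\<in>S. d1 z \<noteq> c' z} \<le> n" using Suc.prems(4) by linarith
      moreover have "config_on V R S d1"
        unfolding d1_def by (rule config_on_swap[OF Suc.prems(1) S_subset x(1) y(1)])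
      moreover have "d1 ` S = home" unfolding d1_def image_swap[OF x(1) y(1)] by (rule Suc.prems(2))
      moreover have "\<forall>z\<in>R-S. d1 z = c z" using Suc.prems(3) x(1) y(1) by (auto simp: d1_def)
      ultimately have "reach_within E R d1 c' (n * K)" using Suc.IH by blast
      moreover have "reach_within E R d d1 K"
        unfolding d1_def K_def by (rule reach_within_swap[OF Suc.prems(1,2) x(1) y(1) xy])
      ultimately show ?thesis using reach_within_trans[of E R d d1 K c' "n * K"] by simp
    qed
  qed
  moreover have "card {x\<in>S. c x \<noteq> c' x} \<le> s" using card_S finite_S by (auto intro: card_mono)
  ultimately show ?thesis using c out by (simp add: K_def)
qed

lemma reach_within_reconfigure:
  assumes "connected_graph V E" "finite V" and c: "config_on V R S c"
    and c': "config_on V R S c'" "\<forall>x\<in>R-S. c' x = c x"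
  shows "reach_within E R c c' (2 * s * card V + s * (3 * (2 * s + 3)))"
proof -
  obtain c1 where c1: "reach_within E R c c1 (s * card V)" "config_on V R S c1" "c1 ` S = home"
    "\<forall>x\<in>R-S. c1 x = c x"
    using reach_within_gather[OF assms(1,2) c S_subset home_subset] card_home card_S by auto
  obtain c2 where c2: "reach_within E R c' c2 (s * card V)" "config_on V R S c2" "c2 ` S = home"
    "\<forall>x\<in>R-S. c2 x = c' x"
    using reach_within_gather[OF assms(1,2) c'(1) S_subset home_subset] card_home card_S by auto
  have "reach_within E R c1 c2 (s * (3 * (2 * s + 3)))"
    using reach_within_permute_home[OF c1(2,3) c2(2,3)] c1(4) c2(4) c'(2) by simp
  from reach_within_trans[OF reach_within_trans[OF c1(1) this] reach_within_sym[OF c2(1)]]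
  show ?thesis by (simp add: algebra_simps)
qed

end

section \<open>T-junctions inside meta-havens\<close>

text \<open>A neighbour z of P ! j that lies on P only beyond P ! Suc j either lies far enough ahead, so
  that P can be cut before it, or it closes a short cycle, which is then used as a shortcut and
  P ! Suc j becomes the pendant vertex.\<close>
lemma t_junction_of_branch_ahead:
  assumes P: "is_path E P" and L: "L \<le> j" "j + 2 * L < length P"
    and z: "{P ! j, z} \<in> E" "z \<noteq> P ! j" "z \<noteq> P ! Suc j"
    and ahead: "\<And>t. t < length P \<Longrightarrow> P ! t = z \<Longrightarrow> j < t"
  shows "\<exists>Q b m. t_junction E Q b m L"
proof (cases "z \<in> set P")
  case False
  then show ?thesis using P L z by (intro exI[of _ P] exI[of _ z] exI[of _ j]) (auto simp: t_junction_def)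
next
  case True
  have dP: "distinct P" using P by (simp add: is_path_def)
  obtain t where t: "t < length P" "P ! t = z" using True by (auto simp: in_set_conv_nth)
  have tj: "j + 2 \<le> t" using ahead[OF t] t z(3) by (cases "t = Suc j") auto
  show ?thesis
  proof (cases "j + L < t")
    case True
    have "is_path E (take t P)" using P tj by (intro is_path_take) auto
    moreover have "z \<notin> set (take t P)" using t nth_in_set_take_iff[OF dP t(1)] by simp
    ultimately show ?thesis using True t L z(1) tj
      by (intro exI[of _ "take t P"] exI[of _ z] exI[of _ j]) (auto simp: t_junction_def)
  next
    case False
    define Q where "Q = take (Suc j) P @ drop t P"
    have j: "Suc j < length P" using tj t by simp
    have "set (take (Suc j) P) \<inter> set (drop t P) = {}"
      using set_take_disj_set_drop_if_distinct[OF dP, of "Suc j" t] tj by simp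
    moreover have "last (take (Suc j) P) = P ! j" using j by (simp add: take_Suc_conv_app_nth)
    moreover have "hd (drop t P) = z" using t by (simp add: hd_drop_conv_nth)
    ultimately have "is_path E Q"
      unfolding Q_def using P t z(1) by (intro is_path_append is_path_take is_path_drop) auto
    moreover have "P ! Suc j \<notin> set Q"
      unfolding Q_def using nth_in_set_take_iff[OF dP j] nth_in_set_drop_iff[OF dP j] tj by simp
    moreover have "{Q ! j, P ! Suc j} \<in> E" using P j by (simp add: Q_def nth_append is_path_def)
    ultimately show ?thesis using False L t j
      by (intro exI[of _ Q] exI[of _ "P ! Suc j"] exI[of _ j]) (auto simp: t_junction_def Q_def)
  qed
qed

lemma t_junction_of_branch:
  assumes P: "is_path E P" and L: "2 * L \<le> j" "j + 2 * L < length P"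
    and z: "{P ! j, z} \<in> E" "z \<noteq> P ! j" "z \<noteq> P ! Suc j" "z \<noteq> P ! (j - 1)"
  shows "\<exists>Q b m. t_junction E Q b m L"
proof (cases "\<forall>t. t < length P \<longrightarrow> P ! t = z \<longrightarrow> j < t")
  case True
  then show ?thesis using t_junction_of_branch_ahead[OF P _ L(2) z(1-3)] L by auto
next
  case False
  then obtain t where t: "t < length P" "P ! t = z" "\<not> j < t" by auto
  then have "t < j" using z(2) by (cases "t = j") auto
  define j' where "j' = length P - 1 - j"
  have dP: "distinct P" using P by (simp add: is_path_def)
  have "rev P ! j' = P ! j" "rev P ! Suc j' = P ! (j - 1)"
    using L \<open>t < j\<close> unfolding j'_def by (simp_all add: rev_nth Suc_diff_Suc)
  moreover have "j' < t'" if "t' < length (rev P)" "rev P ! t' = z" for t'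
  proof -
    have "P ! (length P - Suc t') = P ! t" using that t by (simp add: rev_nth)
    then have "length P - Suc t' = t" using nth_eq_iff_index_eq[OF dP] that t(1) by simp
    then show ?thesis using that \<open>t < j\<close> L unfolding j'_def by simp
  qed
  moreover have "L \<le> j'" "j' + 2 * L < length (rev P)" using L unfolding j'_def by auto
  ultimately show ?thesis using t_junction_of_branch_ahead[OF is_path_rev[OF P]] z by simp
qed

lemma strong_haven_anchor_index:
  assumes "strong_haven E q w P"
  obtains j where "j < length P" "P ! j = w" "(q + 2) div 3 \<le> j" "(q + 2) div 3 \<le> q - j"
proof -
  have P: "is_path E P" "length P = q + 1"
    using assms by (auto simp: strong_haven_def haven_for_def haven_def)
  then have dP: "distinct P" and P_ne: "P \<noteq> []" by (auto simp: is_path_def)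
  obtain d1 i1 j where h1: "i1 < length P" "j < length P" "P ! i1 = hd P" "P ! j = w"
    "d1 = (if i1 \<le> j then j - i1 else i1 - j)" "(q + 2) div 3 \<le> d1"
    using assms unfolding strong_haven_def haven_for_def path_dist_def by blast
  obtain d2 i2 j2 where h2: "i2 < length P" "j2 < length P" "P ! i2 = last P" "P ! j2 = w"
    "d2 = (if i2 \<le> j2 then j2 - i2 else i2 - j2)" "(q + 2) div 3 \<le> d2"
    using assms unfolding strong_haven_def haven_for_def path_dist_def by blast
  have "i1 = 0" using h1(1,3) nth_eq_iff_index_eq[OF dP, of i1 0] P_ne by (simp add: hd_conv_nth)
  moreover have "i2 = q" using h2(1,3) nth_eq_iff_index_eq[OF dP, of i2 q] P_ne P(2)
    by (simp add: last_conv_nth)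
  moreover have "j2 = j" using h1(2,4) h2(2,4) nth_eq_iff_index_eq[OF dP, of j2 j] by simp
  ultimately show ?thesis using that[of j] h1 h2 P(2) by (auto split: if_splits)
qed

lemma meta_haven_edges_subset:
  assumes "meta_haven V E r q V' E'"
  shows "E' \<subseteq> E"
proof
  fix e assume "e \<in> E'"
  then obtain w P T where "hat_haven_edges E q w P T (path_edges P \<union> T)" "e \<in> path_edges P \<union> T"
    using assms unfolding meta_haven_def by fast
  then show "e \<in> E" using path_edges_subset
    unfolding hat_haven_edges_def strong_haven_def haven_for_def haven_def by blast
qed

lemma card_meta_haven_edges_le:
  assumes "meta_haven V E r q V' E'"
  shows "card E' \<le> r * (q + 3)"
proof -
  obtain hs where hs: "length hs = r" "\<forall>(w, P, T)\<in>set hs. hat_haven_edges E q w P T (path_edges P \<union> T)"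
    "E' = (\<Union>(w, P, T)\<in>set hs. path_edges P \<union> T)"
    using assms unfolding meta_haven_def by blast
  have bound: "card (case h of (w, P, T) \<Rightarrow> path_edges P \<union> T) \<le> q + 3" if "h \<in> set hs" for h
  proof -
    obtain w P T where h: "h = (w, P, T)" by (cases h)
    then have "length P = q + 1" "card T = 3"
      using hs(2) that unfolding hat_haven_edges_def strong_haven_def haven_for_def haven_def by auto
    then show ?thesis using card_path_edges_le[of P] card_Un_le[of "path_edges P" T] h by simp
  qed
  have "card E' \<le> (\<Sum>h\<in>set hs. card (case h of (w, P, T) \<Rightarrow> path_edges P \<union> T))"
    unfolding hs(3) by (rule card_UN_le) simp
  also have "\<dots> \<le> card (set hs) * (q + 3)"
    using sum_bounded_above[of "set hs" "\<lambda>h. card (case h of (w, P, T) \<Rightarrow> path_edges P \<union> T)", OF bound]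
    by simp
  also have "\<dots> \<le> r * (q + 3)" using card_length[of hs] hs(1) by simp
  finally show ?thesis .
qed

lemma card_meta_haven_vertices_le:
  assumes "graph V E" "meta_haven V E r q V' E'"
  shows "card V' \<le> 2 * r * (q + 3)"
proof -
  have edge: "card e \<le> 2" if "e \<in> E'" for e
  proof -
    have "e \<in> E" using that meta_haven_edges_subset[OF assms(2)] by blast
    then obtain u v where "e = {u, v}" using assms(1) unfolding graph_def by blast
    then show ?thesis by (simp add: card_insert_if)
  qed
  have "V' = \<Union>E'" using assms(2) by (simp add: meta_haven_def)
  then have "card V' \<le> sum card E'" using card_Union_le_sum_card[of E'] by simp
  also have "\<dots> \<le> card E' * 2" using sum_bounded_above[of E' card 2, OF edge] by simp
  also have "\<dots> \<le> 2 * r * (q + 3)" using card_meta_haven_edges_le[OF assms(2)] by simp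
  finally show ?thesis .
qed

lemma finite_meta_haven_vertices:
  assumes "graph V E" "meta_haven V E r q V' E'"
  shows "finite V'"
proof -
  have "V' = \<Union>E'" using assms(2) by (simp add: meta_haven_def)
  moreover have "\<Union>E \<subseteq> V" using assms(1) unfolding graph_def by auto
  ultimately have "V' \<subseteq> V" using meta_haven_edges_subset[OF assms(2)] by blast
  then show ?thesis using assms(1) finite_subset unfolding graph_def by blast
qed

lemma meta_haven_t_junction:
  assumes G: "graph V E" and MH: "meta_haven V E r q V' E'" and "V' \<noteq> {}"
    and L: "2 * L \<le> (q + 2) div 3"
  shows "\<exists>Q b m. t_junction E' Q b m L"
proof -
  obtain hs where hs: "\<forall>(w, P, T)\<in>set hs. hat_haven_edges E q w P T (path_edges P \<union> T)"
    "E' = (\<Union>(w, P, T)\<in>set hs. path_edges P \<union> T)" and "V' = \<Union>E'"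
    using MH unfolding meta_haven_def by blast
  then obtain w P T where wPT: "(w, P, T) \<in> set hs" using \<open>V' \<noteq> {}\<close> by auto
  then have hat: "strong_haven E q w P" "T \<subseteq> E" "card T = 3" "\<forall>e\<in>T. w \<in> e"
    and sub: "path_edges P \<union> T \<subseteq> E'"
    using hs unfolding hat_haven_edges_def by auto
  have P: "is_path E' P" "length P = q + 1"
    using hat(1) sub is_path_path_edges_mono
    unfolding strong_haven_def haven_for_def haven_def by auto
  obtain j where j: "j < length P" "P ! j = w" "(q + 2) div 3 \<le> j" "(q + 2) div 3 \<le> q - j"
    using strong_haven_anchor_index[OF hat(1)] by blast
  have "card {{w, P ! (j - 1)}, {w, P ! Suc j}} \<le> 2" by (simp add: card_insert_if)
  then have "\<not> T \<subseteq> {{w, P ! (j - 1)}, {w, P ! Suc j}}"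
    using card_mono[of "{{w, P ! (j - 1)}, {w, P ! Suc j}}" T] hat(3) by auto
  then obtain e where e: "e \<in> T" "e \<noteq> {w, P ! (j - 1)}" "e \<noteq> {w, P ! Suc j}" by auto
  obtain u v where uv: "u \<noteq> v" "e = {u, v}" using G e(1) hat(2) unfolding graph_def by blast
  define z where "z = (if u = w then v else u)"
  have "e = {w, z}" "z \<noteq> w" using uv e(1) hat(4) unfolding z_def by auto
  then have "{P ! j, z} \<in> E'" "z \<noteq> P ! j" "z \<noteq> P ! Suc j" "z \<noteq> P ! (j - 1)"
    using e sub j(2) by auto
  moreover have "2 * L \<le> j" "j + 2 * L < length P" using j L P(2) by auto
  ultimately show ?thesis using t_junction_of_branch[OF P(1)] by blast
qed

lemma move_count_le:
  fixes k s n :: nat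
  assumes "1 \<le> k" "s \<le> k" "n \<le> 4 * k * (6 * k ^ 2 + 3)"
  shows "2 * s * n + s * (3 * (2 * s + 3)) \<le> 100 * k ^ 7"
proof -
  have "2 * s * n \<le> 2 * k * (4 * k * (6 * k ^ 2 + 3))"
    using assms by (intro mult_le_mono) auto
  moreover have "s * (3 * (2 * s + 3)) \<le> k * (3 * (2 * k + 3))"
    using assms by (intro mult_le_mono) auto
  moreover have "2 * k * (4 * k * (6 * k ^ 2 + 3)) = 48 * k ^ 4 + 24 * k ^ 2"
    "k * (3 * (2 * k + 3)) = 6 * k ^ 2 + 9 * k"
    by (simp_all add: algebra_simps eval_nat_numeral)
  moreover have "k \<le> k ^ 4" "k ^ 2 \<le> k ^ 4" "k ^ 4 \<le> k ^ 7"
    using assms(1) power_increasing[of _ _ k] by (simp_all add: self_le_power)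
  ultimately show ?thesis by linarith
qed

lemma meta_haven_reconfiguration:
  fixes pos \<iota>' :: "'r \<Rightarrow> 'a"
  assumes G: "graph V E" and "finite R" and pos: "inj_on pos R"
    and MH: "meta_haven V E r (6 * card R ^ 2) V' E'" and r: "r \<le> 2 * card R"
    and S: "S \<subseteq> R" "\<forall>x\<in>R. pos x \<in> V' \<longleftrightarrow> x \<in> S" and \<iota>': "inj_on \<iota>' S" "\<iota>' ` S \<subseteq> V'"
  shows "\<exists>cs. move_sequence E' R cs \<and> hd cs = pos \<and> (\<forall>x\<in>S. last cs x = \<iota>' x) \<and>
    length cs - 1 \<le> 100 * card R ^ 7"
proof (cases "S = {}")
  case True
  then show ?thesis by (intro exI[of _ "[pos]"]) (simp add: move_sequence_def)
next
  case False
  define k where "k = card R"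
  have "finite S" using assms(2) S(1) finite_subset by blast
  then have S_pos: "0 < card S" using False by (simp add: card_gt_0_iff)
  have s: "card S \<le> k" using card_mono[OF assms(2) S(1)] by (simp add: k_def)
  then have k: "1 \<le> k" using S_pos by linarith
  have "2 * card S \<le> (6 * k ^ 2 + 2) div 3"
    using s k power_increasing[of 1 2 k] by simp
  moreover have "V' \<noteq> {}" using False S by blast
  ultimately obtain Q b m where tj: "t_junction E' Q b m (card S)"
    using meta_haven_t_junction[OF G MH[folded k_def]] by blast
  have V': "V' = \<Union>E'" "connected_graph V' E'" using MH unfolding meta_haven_def by blast+
  have "2 \<le> length Q" using tj S_pos by (auto simp: t_junction_def)
  then have "set Q \<subseteq> V'" "b \<in> V'"
    using tj set_path_subset_Union[of E' Q] V'(1) by (auto simp: t_junction_def)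
  then interpret t_junction_robots E' Q b m "card S" V' R S
    using tj S(1) \<open>finite S\<close> by (simp add: t_junction_robots_def t_junction_robots_axioms_def)
  define c' where "c' = override_on pos \<iota>' S"
  have "config_on V' R S pos" using pos S(2) by (simp add: config_on_def)
  moreover from this have "config_on V' R S c'" unfolding c'_def using \<iota>' by (rule config_on_override_on)
  ultimately have "reach_within E' R pos c' (2 * card S * card V' + card S * (3 * (2 * card S + 3)))"
    using reach_within_reconfigure[OF V'(2) finite_meta_haven_vertices[OF G MH]]
    by (simp add: c'_def override_on_def)
  then obtain cs where cs: "move_sequence E' R cs" "hd cs = pos" "\<forall>x\<in>R. last cs x = c' x"
    "length cs - 1 \<le> 2 * card S * card V' + card S * (3 * (2 * card S + 3))"
    using move_sequence_if_reach_within by blast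
  have "card V' \<le> 2 * r * (6 * k ^ 2 + 3)" using card_meta_haven_vertices_le[OF G MH] by (simp add: k_def)
  also have "\<dots> \<le> 4 * k * (6 * k ^ 2 + 3)" using r by (intro mult_le_mono1) (simp add: k_def)
  finally have "length cs - 1 \<le> 100 * k ^ 7" using cs(4) move_count_le[OF k s] by (meson le_trans)
  moreover have "\<forall>x\<in>S. last cs x = \<iota>' x" using cs(3) S(1) by (auto simp: c'_def override_on_def)
  ultimately show ?thesis using cs(1,2) unfolding k_def by blast
qed

theorem mainTheorem10:
  "\<exists>q :: nat \<Rightarrow> nat. (\<lambda>k. real (q k)) \<in> \<Theta>(\<lambda>k. real k ^ 2) \<and>
   (\<exists>C :: real.
     \<forall>(V :: nat set) (E :: nat set set) (R :: nat set) (pos :: nat \<Rightarrow> nat) (r :: nat) V' E'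
       (S :: nat set) (\<iota>' :: nat \<Rightarrow> nat).
       graph V E \<and> finite R \<and> inj_on pos R \<and> pos ` R \<subseteq> V \<and>
       meta_haven V E r (q (card R)) V' E' \<and> r \<le> 2 * card R \<and>
       S \<subseteq> R \<and> (\<forall>x\<in>R. pos x \<in> V' \<longleftrightarrow> x \<in> S) \<and>
       inj_on \<iota>' S \<and> \<iota>' ` S \<subseteq> V'
       \<longrightarrow> (\<exists>cs. move_sequence E' R cs \<and> hd cs = pos \<and> (\<forall>x\<in>S. last cs x = \<iota>' x) \<and>
              real (length cs - 1) \<le> C * real (card R) ^ 7))"
proof (rule exI[of _ "\<lambda>k. 6 * k ^ 2"], intro conjI exI[of _ 100] allI impI, goal_cases)
  case 1
  show ?case by real_asymp
next
  case (2 V E R pos r V' E' S \<iota>')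
  then obtain cs where "move_sequence E' R cs" "hd cs = pos" "\<forall>x\<in>S. last cs x = \<iota>' x"
    "length cs - 1 \<le> 100 * card R ^ 7"
    using meta_haven_reconfiguration[of V E R pos r V' E' S \<iota>'] by blast
  moreover from this(4) have "real (length cs - 1) \<le> 100 * real (card R) ^ 7"
    by (metis of_nat_le_iff of_nat_mult of_nat_numeral of_nat_power)
  ultimately show ?case by blast
qed

end
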